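(* Let $b\ge 2$ be an integer, $d\in\{0,1,\dots,b-1\}$, and $d'=b-1-d$. For $i\ge1$ put $\gamma'_i=\sum_{0\le a<b,\ a\ne d'}a^i$. Define $v_{0;m}$ for $m\ge0$ recursively by $$(b^{m+1}-b+1)\,v_{0;m}=b^{m+1}+\sum_{i=1}^{m}\binom{m}{i}\gamma'_i\,v_{0;m-i},$$ and for $j\ge1$, $m\ge0$, define $v_{j;m}$ recursively by $$(b^{m+1}-b+1)\,v_{j;m}=\sum_{i=1}^{m}\binom{m}{i}\gamma'_i\,v_{j;m-i}+\sum_{i=0}^{m}\binom{m}{i}(d')^i\,v_{j-1;m-i}$$ (with $0^0=1$). In particular $v_{j;0}=b$ for all $j\ge0$. Then for every $l\ge1$ and $k\ge0$, $$H^{(k)}=\sum_{\substack{0<n<b^{l-1}\\ k(n)=k}}\frac1n\;+\;b\sum_{\substack{b^{l-1}\le n<b^{l}\\ k(n)\le k}}\frac1{n+1}\;+\;\sum_{m=1}^{\infty}\ \sum_{\substack{b^{l-1}\le n<b^{l}\\ k(n)\le k}}\frac{v_{k-k(n);m}}{(n+1)^{m+1}}.$$ Moreover, the numbers $v_{j;m}$ ($j\ge0$, $m\ge1$) satisfy: (i) $0<v_{j;m}\le b$; (ii) for fixed $j$, $(v_{j;m})_{m\ge0}$ is strictly decreasing, except when $b=2$, $d=1$, $j=0$, in which case $v_{0;m}=2$ for all $m$; (iii) for each fixed $m\ge1$, $(v_{j;m})_{j\ge0}$ is strictly decreasing and converges to $b/(m+1)$.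
   Context: For an integer $n\ge0$, its (minimal) base-$b$ representation is the string of base-$b$ digits of $n$ without leading zeros (the empty string for $n=0$); $k(n)$ denotes the number of occurrences of the digit $d$ in this representation. For $k\ge0$, the Irwin sum is $H^{(k)}=\sum_{n\ge1,\ k(n)=k}1/n$ (a convergent series of positive terms; it equals $0$ when $b=2$, $d=1$, $k=0$). *)

theory Defs
  imports "HOL-Analysis.Analysis"
begin

function base_digits :: "nat \<Rightarrow> nat \<Rightarrow> nat list" where
  "base_digits b n = (if n = 0 \<or> b < 2 then [] else n mod b # base_digits b (n div b))"
  by auto
termination by (relation "Wellfounded.measure snd") auto

definition digit_count :: "nat \<Rightarrow> nat \<Rightarrow> nat \<Rightarrow> nat" where
  "digit_count b d n = count_list (base_digits b n) d"

definition irwin_sum :: "nat \<Rightarrow> nat \<Rightarrow> nat \<Rightarrow> real" where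
  "irwin_sum b d k = infsum (\<lambda>n. 1 / real n) {n. 0 < n \<and> digit_count b d n = k}"

definition gamma' :: "nat \<Rightarrow> nat \<Rightarrow> nat \<Rightarrow> real" where
  "gamma' b d i = (\<Sum>a\<in>{a. a < b \<and> a \<noteq> b - 1 - d}. real a ^ i)"

fun vv :: "nat \<Rightarrow> nat \<Rightarrow> nat \<Rightarrow> nat \<Rightarrow> real" where
  "vv b d 0 m =
     (real b ^ (m+1) + (\<Sum>i\<in>{1..m}. real (m choose i) * gamma' b d i * vv b d 0 (m - i)))
     / (real b ^ (m+1) - real b + 1)"
| "vv b d (Suc j) m =
     ((\<Sum>i\<in>{1..m}. real (m choose i) * gamma' b d i * vv b d (Suc j) (m - i))
      + (\<Sum>i\<in>{0..m}. real (m choose i) * real (b - 1 - d) ^ i * vv b d j (m - i)))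
     / (real b ^ (m+1) - real b + 1)"

end

theory Submission
  imports Defs
begin

text \<open>Every \<open>n \<ge> b^(l-1)\<close> is uniquely \<open>n = p b^r + s\<close> with an \<open>l\<close>-digit prefix
  \<open>b^(l-1) \<le> p < b^l\<close> and an \<open>r\<close>-digit tail \<open>s < b^r\<close>, and then \<open>k(n)\<close> is \<open>k(p)\<close> plus the
  number of digits \<open>d\<close> among the \<open>r\<close> digits of \<open>s\<close>, leading zeros included. Expanding
  \<open>1 / (p b^r + s) = \<Sum>\<^sub>m (1 - s/b^r)^m / (b^r (p+1)^(m+1))\<close> and summing over all tails with
  \<open>k - k(p)\<close> digits \<open>d\<close> turns \<open>H^(k)\<close> into the stated series, with the moments
  \<open>\<Sum>\<^sub>r \<Sum>\<^sub>s (1 - s/b^r)^m / b^r\<close> as coefficients. Splitting off the leading digit of the tail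
  shows that these moments satisfy the recursion defining \<open>vv\<close>, whose solution is
  unique. Positivity, the bound \<open>b\<close> (the moment for \<open>m = 0\<close>) and the decrease in \<open>m\<close> are read
  off from the moments; the decrease in \<open>j\<close> and the limit \<open>b/(m+1)\<close> follow from the recursion
  by induction on \<open>m\<close>.\<close>

declare base_digits.simps[simp del] vv.simps[simp del]

lemma sum_atMost_eq_head_plus_tail:
  fixes f :: "nat \<Rightarrow> 'a::comm_monoid_add"
  shows "(\<Sum>i\<le>m. f i) = f 0 + (\<Sum>i\<in>{1..m}. f i)"
proof -
  have "{..m} = insert 0 {1..m}" by auto
  then show ?thesis by simp
qed

lemma sum_lessThan_power_Suc:
  fixes F :: "nat \<Rightarrow> 'a::comm_monoid_add"
  shows "(\<Sum>s<b ^ Suc r. F s) = (\<Sum>a<b. \<Sum>s<b ^ r. F (a * b ^ r + s))"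
proof -
  have "(\<Sum>s<b ^ Suc r. F s) = (\<Sum>a<b. sum F {a * b ^ r ..< a * b ^ r + b ^ r})"
    using sum.nat_group[of F "b ^ r" b] by (simp add: mult.commute)
  also have "\<dots> = (\<Sum>a<b. \<Sum>s<b ^ r. F (a * b ^ r + s))"
  proof (rule sum.cong[OF refl])
    fix a
    show "sum F {a * b ^ r ..< a * b ^ r + b ^ r} = (\<Sum>s<b ^ r. F (a * b ^ r + s))"
      by (subst sum.atLeastLessThan_shift_0) (simp add: atLeast0LessThan comp_def)
  qed
  finally show ?thesis .
qed

lemma suminf_strict_mono:
  fixes f g :: "nat \<Rightarrow> real"
  assumes "summable f" "summable g" "\<And>n. f n \<le> g n" "f i < g i"
  shows "suminf f < suminf g"
proof -
  have "0 < (\<Sum>n. g n - f n)"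
    using assms by (intro suminf_pos2[where i = i]) (auto intro: summable_diff)
  also have "(\<Sum>n. g n - f n) = suminf g - suminf f"
    using suminf_diff[OF assms(2,1)] by simp
  finally show ?thesis by simp
qed

lemma has_sum_SigmaI_nonneg:
  fixes f :: "'a \<times> 'b \<Rightarrow> real"
  assumes "\<And>x. x \<in> A \<Longrightarrow> ((\<lambda>y. f (x, y)) has_sum g x) (B x)"
    and "(g has_sum S) A"
    and "\<And>x y. x \<in> A \<Longrightarrow> y \<in> B x \<Longrightarrow> 0 \<le> f (x, y)"
  shows "(f has_sum S) (Sigma A B)"
  using assms by (intro has_sum_SigmaI summable_on_SigmaI) (auto dest: has_sum_imp_summable)

lemma has_sum_reciprocal_expansion:
  fixes x u :: real
  assumes "0 < x" "0 \<le> u" "u \<le> 1"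
  shows "((\<lambda>m. (1 - u) ^ m / (x + 1) ^ (m + 1)) has_sum 1 / (x + u)) UNIV"
proof -
  define q where "q = (1 - u) / (x + 1)"
  have q: "0 \<le> q" "q < 1" using assms unfolding q_def by (auto simp: field_simps)
  have "(\<lambda>m. q ^ m / (x + 1)) sums (1 / (1 - q) / (x + 1))"
    using q by (intro sums_divide geometric_sums) auto
  moreover have "1 - q = (x + u) / (x + 1)"
    using assms unfolding q_def by (simp add: field_simps)
  then have "1 / (1 - q) / (x + 1) = 1 / (x + u)"
    using assms by simp
  moreover have "q ^ m / (x + 1) = (1 - u) ^ m / (x + 1) ^ (m + 1)" for m
    unfolding q_def by (simp add: power_divide)
  ultimately show ?thesis
    using assms by (intro sums_nonneg_imp_has_sum) auto
qed

lemma binomial_div_Suc_diff: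
  assumes "i \<le> m"
  shows "real (m choose i) * x / real (m - i + 1) = real (Suc m choose i) * x / real (m + 1)"
proof -
  have "(m - i + 1) * (Suc m choose i) = (m + 1) * (m choose i)"
    using binomial_absorb_comp[of "Suc m" i] assms by (simp add: Suc_diff_le)
  then have "real (m - i + 1) * real (Suc m choose i) = real (m + 1) * real (m choose i)"
    by (metis of_nat_mult)
  then have "real (m choose i) * x * real (m + 1) = real (Suc m choose i) * x * real (m - i + 1)"
    by (metis mult.assoc mult.commute)
  then show ?thesis by (subst frac_eq_eq) auto
qed

lemma sum_binomial_power_sums: "(\<Sum>i\<le>m. real (Suc m choose i) * (\<Sum>a<b. real a ^ i)) = real b ^ (m + 1)"
proof -
  have "(\<Sum>i\<le>m. real (Suc m choose i) * (\<Sum>a<b. real a ^ i))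
      = (\<Sum>a<b. \<Sum>i\<le>m. real (Suc m choose i) * real a ^ i)"
    by (simp add: sum_distrib_left sum.swap[of _ "{..m}"])
  also have "\<dots> = (\<Sum>a<b. real (Suc a) ^ Suc m - real a ^ Suc m)"
  proof (rule sum.cong[OF refl])
    fix a
    have "(real a + 1) ^ Suc m = (\<Sum>i\<le>Suc m. real (Suc m choose i) * real a ^ i)"
      using binomial_ring[of "real a" 1 "Suc m"] by simp
    then show "(\<Sum>i\<le>m. real (Suc m choose i) * real a ^ i) = real (Suc a) ^ Suc m - real a ^ Suc m"
      by (simp add: add.commute)
  qed
  also have "\<dots> = real b ^ (m + 1)"
    using sum_lessThan_telescope[of "\<lambda>a. real a ^ Suc m" b] by simp
  finally show ?thesis .
qed

lemma sum_binomial_power_sums_div: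
  "(\<Sum>i\<in>{1..m}. real (m choose i) * (\<Sum>a<b. real a ^ i) / real (m - i + 1))
     = (real b ^ (m + 1) - real b) / real (m + 1)"
proof -
  have "(\<Sum>i\<in>{1..m}. real (m choose i) * (\<Sum>a<b. real a ^ i) / real (m - i + 1))
      = (\<Sum>i\<in>{1..m}. real (Suc m choose i) * (\<Sum>a<b. real a ^ i)) / real (m + 1)"
    unfolding sum_divide_distrib by (intro sum.cong refl binomial_div_Suc_diff) simp
  also have "(\<Sum>i\<in>{1..m}. real (Suc m choose i) * (\<Sum>a<b. real a ^ i)) = real b ^ (m + 1) - real b"
    using sum_binomial_power_sums[of m b]
      sum_atMost_eq_head_plus_tail[of "\<lambda>i. real (Suc m choose i) * (\<Sum>a<b. real a ^ i)" m]
    by simp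
  finally show ?thesis .
qed

fun padded_digit_count :: "nat \<Rightarrow> nat \<Rightarrow> nat \<Rightarrow> nat \<Rightarrow> nat" where
  "padded_digit_count b d 0 s = 0"
| "padded_digit_count b d (Suc r) s = (if s mod b = d then 1 else 0) + padded_digit_count b d r (s div b)"

definition digit_moment :: "nat \<Rightarrow> nat \<Rightarrow> nat \<Rightarrow> nat \<Rightarrow> nat \<Rightarrow> real" where
  "digit_moment b d j m r =
     (\<Sum>s<b ^ r. if padded_digit_count b d r s = j then (1 - real s / real b ^ r) ^ m / real b ^ r else 0)"

text \<open>The \<open>i = 0\<close> summand \<open>(b - 1) X j m\<close> of \<open>moment_op\<close> is the term that the defining
  recursion of \<open>vv\<close> has moved to its left-hand side, see \<open>vv_moment_op_eq\<close>.\<close>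

definition moment_op :: "nat \<Rightarrow> nat \<Rightarrow> (nat \<Rightarrow> nat \<Rightarrow> real) \<Rightarrow> nat \<Rightarrow> nat \<Rightarrow> real" where
  "moment_op b d X j m = (\<Sum>i\<le>m. real (m choose i) * (gamma' b d i * X j (m - i)
        + (if 0 < j then real (b - 1 - d) ^ i * X (j - 1) (m - i) else 0)))"

definition vv_source :: "nat \<Rightarrow> nat \<Rightarrow> nat \<Rightarrow> nat \<Rightarrow> real" where
  "vv_source b d j m = (if j = 0 then real b ^ (m + 1)
     else (\<Sum>i\<le>m. real (m choose i) * real (b - 1 - d) ^ i * vv b d (j - 1) (m - i)))"

definition tail_blocks :: "nat \<Rightarrow> nat \<Rightarrow> nat \<Rightarrow> (nat \<times> nat) set" where
  "tail_blocks b d j = Sigma UNIV (\<lambda>r. {s. s < b ^ r \<and> padded_digit_count b d r s = j})"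

lemma gamma'_nonneg: "0 \<le> gamma' b d i"
  unfolding gamma'_def by (intro sum_nonneg) auto

lemma moment_op_sum:
  "(\<Sum>r\<in>A. moment_op b d (X r) j m) = moment_op b d (\<lambda>j m. \<Sum>r\<in>A. X r j m) j m"
  unfolding moment_op_def
  by (subst sum.swap) (cases "0 < j"; simp add: sum_distrib_left sum.distrib distrib_left mult.assoc)

lemma moment_op_mono:
  assumes "\<And>j m. X j m \<le> Y j m"
  shows "moment_op b d X j m \<le> moment_op b d Y j m"
  unfolding moment_op_def
  by (intro sum_mono mult_left_mono add_mono) (auto intro!: mult_left_mono assms gamma'_nonneg)

lemma
  assumes "\<And>j m. summable (\<lambda>r. X r j m)"
  shows summable_moment_op: "summable (\<lambda>r. moment_op b d (X r) j m)"
    and suminf_moment_op: "(\<Sum>r. moment_op b d (X r) j m) = moment_op b d (\<lambda>j m. \<Sum>r. X r j m) j m"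
proof -
  have summable_term: "summable (\<lambda>r. real (m choose i) * (gamma' b d i * X r j (m - i)
        + (if 0 < j then real (b - 1 - d) ^ i * X r (j - 1) (m - i) else 0)))" for i
    using assms by (cases "0 < j") (auto intro!: summable_mult summable_add)
  then show "summable (\<lambda>r. moment_op b d (X r) j m)"
    unfolding moment_op_def by (rule summable_sum)
  have "(\<Sum>r. moment_op b d (X r) j m) = (\<Sum>i\<le>m. \<Sum>r. real (m choose i) * (gamma' b d i * X r j (m - i)
        + (if 0 < j then real (b - 1 - d) ^ i * X r (j - 1) (m - i) else 0)))"
    unfolding moment_op_def by (rule suminf_sum) (rule summable_term)
  also have "\<dots> = moment_op b d (\<lambda>j m. \<Sum>r. X r j m) j m"
    unfolding moment_op_def
  proof (intro sum.cong refl)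
    fix i
    have summable_gamma': "summable (\<lambda>r. gamma' b d i * X r j (m - i))"
      and summable_reflected: "summable (\<lambda>r. real (b - 1 - d) ^ i * X r (j - 1) (m - i))"
      using assms by (auto intro: summable_mult)
    have "(\<Sum>r. gamma' b d i * X r j (m - i) + real (b - 1 - d) ^ i * X r (j - 1) (m - i))
        = gamma' b d i * (\<Sum>r. X r j (m - i)) + real (b - 1 - d) ^ i * (\<Sum>r. X r (j - 1) (m - i))"
      using suminf_add[OF summable_gamma' summable_reflected] assms by (simp add: suminf_mult)
    then show "(\<Sum>r. real (m choose i) * (gamma' b d i * X r j (m - i)
          + (if 0 < j then real (b - 1 - d) ^ i * X r (j - 1) (m - i) else 0)))
        = real (m choose i) * (gamma' b d i * (\<Sum>r. X r j (m - i))
          + (if 0 < j then real (b - 1 - d) ^ i * (\<Sum>r. X r (j - 1) (m - i)) else 0))"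
      using assms summable_gamma' summable_reflected by (cases "0 < j") (simp_all add: suminf_mult summable_add)
  qed
  finally show "(\<Sum>r. moment_op b d (X r) j m) = moment_op b d (\<lambda>j m. \<Sum>r. X r j m) j m" .
qed

lemma vv_0: "vv b d j 0 = real b"
  by (induction j) (subst vv.simps; simp)+

lemma vv_exceptional: "vv 2 1 0 m = 2"
proof (induction m rule: less_induct)
  case (less m)
  have "gamma' 2 1 i = 1" for i
  proof -
    have "{a. a < (2::nat) \<and> a \<noteq> 2 - 1 - 1} = {1}" by auto
    then show ?thesis unfolding gamma'_def by simp
  qed
  then have "(\<Sum>i\<in>{1..m}. real (m choose i) * gamma' 2 1 i * vv 2 1 0 (m - i))
      = 2 * (\<Sum>i\<in>{1..m}. real (m choose i))"
    using less.IH by (simp add: sum_distrib_left mult.commute)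
  also have "(\<Sum>i\<in>{1..m}. real (m choose i)) = 2 ^ m - 1"
    using sum_atMost_eq_head_plus_tail[of "\<lambda>i. real (m choose i)" m]
    by (simp flip: of_nat_sum add: choose_row_sum)
  finally have "vv 2 1 0 m = (2 ^ (m + 1) + 2 * (2 ^ m - 1)) / (2 ^ (m + 1) - 2 + 1)"
    by (subst vv.simps) simp
  also have "\<dots> = 2"
  proof -
    have "(2::real) * 2 ^ m - 1 \<noteq> 0" using one_le_power[of "2::real" m] by linarith
    then show ?thesis by (simp add: field_simps)
  qed
  finally show ?case .
qed

section \<open>Digit counts\<close>

locale irwin_base =
  fixes b d :: nat
  assumes two_le_base: "2 \<le> b" and digit_less_base: "d < b"
begin

lemma base_pos: "0 < b"
  using two_le_base by simp

lemma pos_of_base_power_le: "b ^ i \<le> n \<Longrightarrow> 0 < n"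
  using base_pos by (metis less_le_trans zero_less_power)

lemma digit_count_of_pos:
  assumes "0 < n"
  shows "digit_count b d n = (if n mod b = d then 1 else 0) + digit_count b d (n div b)"
  using assms two_le_base unfolding digit_count_def by (subst base_digits.simps) auto

lemma digit_count_append:
  assumes "0 < n" "s < b ^ r"
  shows "digit_count b d (n * b ^ r + s) = digit_count b d n + padded_digit_count b d r s"
  using assms(2)
proof (induction r arbitrary: s)
  case 0
  then show ?case by simp
next
  case (Suc r)
  have "s div b < b ^ r"
    using Suc.prems base_pos by (simp add: div_less_iff_less_mult mult.commute)
  moreover have "(n * b ^ Suc r + s) mod b = s mod b"
    by (simp add: mult.commute mult.left_commute)
  moreover have "(n * b ^ Suc r + s) div b = n * b ^ r + s div b"
    using base_pos by (simp add: mult.commute mult.left_commute)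
  moreover have "0 < n * b ^ Suc r + s"
    using assms(1) base_pos by simp
  ultimately show ?case
    using Suc.IH digit_count_of_pos[of "n * b ^ Suc r + s"] by simp
qed

lemma padded_digit_count_leading:
  assumes "a < b" "s < b ^ r"
  shows "padded_digit_count b d (Suc r) (a * b ^ r + s) = (if a = d then 1 else 0) + padded_digit_count b d r s"
  using assms(2)
proof (induction r arbitrary: s)
  case 0
  then show ?case using assms(1) by simp
next
  case (Suc r)
  have split: "a * b ^ Suc r + s = s + (a * b ^ r) * b" by (simp add: algebra_simps)
  have "s div b < b ^ r"
    using Suc.prems base_pos by (simp add: div_less_iff_less_mult mult.commute)
  then show ?case
    using Suc.IH base_pos by (simp only: padded_digit_count.simps split) simp
qed

lemma exists_leading_block:
  assumes "1 \<le> l" "b ^ (l - 1) \<le> N"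
  shows "\<exists>r. b ^ (l - 1) \<le> N div b ^ r \<and> N div b ^ r < b ^ l"
  using assms(2)
proof (induction N rule: less_induct)
  case (less N)
  show ?case
  proof (cases "N < b ^ l")
    case True
    then show ?thesis using less.prems by (intro exI[of _ 0]) simp
  next
    case False
    have "b ^ l = b ^ (l - 1) * b" using assms(1) by (cases l) auto
    then have "b ^ (l - 1) \<le> N div b"
      using False base_pos by (simp add: less_eq_div_iff_mult_less_eq)
    moreover have "N div b < N"
      using False two_le_base by (intro div_less_dividend) (auto intro: Nat.gr0I)
    ultimately obtain r where "b ^ (l - 1) \<le> N div b div b ^ r" "N div b div b ^ r < b ^ l"
      using less.IH by blast
    then show ?thesis by (intro exI[of _ "Suc r"]) (simp add: div_mult2_eq mult.commute)
  qed
qed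

lemma gamma'_0: "gamma' b d 0 = real b - 1"
proof -
  have "{a. a < b \<and> a \<noteq> b - 1 - d} = {..<b} - {b - 1 - d}" by auto
  then show ?thesis
    using digit_less_base unfolding gamma'_def by (simp add: card_Diff_singleton of_nat_diff)
qed

lemma gamma'_add_power: "gamma' b d i + real (b - 1 - d) ^ i = (\<Sum>a<b. real a ^ i)"
proof -
  have "{a. a < b \<and> a \<noteq> b - 1 - d} = {..<b} - {b - 1 - d}" by auto
  then show ?thesis
    using digit_less_base sum.remove[of "{..<b}" "b - 1 - d" "\<lambda>a. real a ^ i"]
    unfolding gamma'_def by simp
qed

text \<open>Reflecting the digits \<open>a \<mapsto> b - 1 - a\<close> turns the special digit \<open>d\<close> into \<open>d' = b - 1 - d\<close>.\<close>

lemma sum_reflected_digit_powers: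
  "(\<Sum>a<b. real (b - 1 - a) ^ i * (if a = d then Y else Z)) = gamma' b d i * Z + real (b - 1 - d) ^ i * Y"
proof -
  define h where "h c = real c ^ i * (if c = b - 1 - d then Y else Z)" for c
  have "(\<Sum>a<b. real (b - 1 - a) ^ i * (if a = d then Y else Z)) = (\<Sum>a<b. h (b - Suc a))"
    using digit_less_base by (intro sum.cong refl) (auto simp: h_def)
  also have "\<dots> = (\<Sum>a<b. h a)" by (rule sum.nat_diff_reindex)
  also have "\<dots> = h (b - 1 - d) + (\<Sum>a\<in>{..<b} - {b - 1 - d}. h a)"
    using digit_less_base by (intro sum.remove) auto
  also have "(\<Sum>a\<in>{..<b} - {b - 1 - d}. h a) = gamma' b d i * Z"
    unfolding gamma'_def sum_distrib_right h_def by (intro sum.cong) auto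
  finally show ?thesis unfolding h_def by simp
qed

section \<open>The recursion for \<open>vv\<close>\<close>

lemma vv_denominator_pos: "0 < real b ^ (m + 1) - real b + 1"
proof -
  have "real b ^ 1 \<le> real b ^ (m + 1)" using two_le_base by (intro power_increasing) auto
  then show ?thesis by simp
qed

lemma vv_eq_source:
  "(real b ^ (m + 1) - real b + 1) * vv b d j m
     = vv_source b d j m + (\<Sum>i\<in>{1..m}. real (m choose i) * gamma' b d i * vv b d j (m - i))"
proof (cases j)
  case 0
  then show ?thesis
    using vv_denominator_pos[of m] by (simp add: vv.simps(1)[of b d m] vv_source_def field_simps)
next
  case (Suc j')
  then show ?thesis
    using vv_denominator_pos[of m]
    by (simp add: vv.simps(2)[of b d j' m] vv_source_def atLeast0AtMost field_simps)
qed

lemma moment_op_split: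
  "moment_op b d X j m = (real b - 1) * X j m + (\<Sum>i\<in>{1..m}. real (m choose i) * gamma' b d i * X j (m - i))
     + (if 0 < j then (\<Sum>i\<le>m. real (m choose i) * real (b - 1 - d) ^ i * X (j - 1) (m - i)) else 0)"
  unfolding moment_op_def distrib_left sum.distrib
  by (simp add: sum_atMost_eq_head_plus_tail[of "\<lambda>i. real (m choose i) * (gamma' b d i * X j (m - i))"]
      gamma'_0 mult.assoc sum.distrib)

lemma vv_moment_op_eq:
  "real b ^ (m + 1) * vv b d j m = (if j = 0 then real b ^ (m + 1) else 0) + moment_op b d (vv b d) j m"
  using vv_eq_source[of m j] by (simp add: moment_op_split vv_source_def algebra_simps)

text \<open>The recursion determines \<open>vv\<close>: the coefficient of \<open>X j m\<close> on the left exceeds its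
  coefficient \<open>b - 1\<close> on the right, and all other terms have smaller indices.\<close>

lemma vv_unique:
  assumes X: "\<And>j m. real b ^ (m + 1) * X j m = (if j = 0 then real b ^ (m + 1) else 0) + moment_op b d X j m"
  shows "X j m = vv b d j m"
proof (induction j arbitrary: m rule: less_induct)
  case (less j)
  note IH_j = less.IH
  show ?case
  proof (induction m rule: less_induct)
    case (less m)
    have "moment_op b d X j m - (real b - 1) * X j m = moment_op b d (vv b d) j m - (real b - 1) * vv b d j m"
      using IH_j less.IH by (simp add: moment_op_split)
    then have "(real b ^ (m + 1) - real b + 1) * X j m = (real b ^ (m + 1) - real b + 1) * vv b d j m"
      using X[of m j] vv_moment_op_eq[of m j] by (simp add: algebra_simps)
    then show ?case using vv_denominator_pos[of m] by simp
  qed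
qed

lemma vv_pos: "0 < vv b d j m"
proof (induction j arbitrary: m rule: less_induct)
  case (less j)
  have source_pos: "0 < vv_source b d j m'" for m'
  proof (cases j)
    case 0
    then show ?thesis using base_pos by (simp add: vv_source_def)
  next
    case (Suc j')
    have "0 < real (m' choose 0) * real (b - 1 - d) ^ 0 * vv b d j' (m' - 0)"
      using less.IH Suc by simp
    also have "\<dots> \<le> (\<Sum>i\<le>m'. real (m' choose i) * real (b - 1 - d) ^ i * vv b d j' (m' - i))"
      using less.IH Suc by (intro member_le_sum) (auto intro!: mult_nonneg_nonneg simp: less_imp_le)
    finally show ?thesis using Suc by (simp add: vv_source_def)
  qed
  show ?case
  proof (induction m rule: less_induct)
    case (less m)
    have "0 \<le> (\<Sum>i\<in>{1..m}. real (m choose i) * gamma' b d i * vv b d j (m - i))"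
      using less.IH by (intro sum_nonneg mult_nonneg_nonneg gamma'_nonneg) (auto intro: less_imp_le)
    then have "0 < (real b ^ (m + 1) - real b + 1) * vv b d j m"
      using vv_eq_source[of m j] source_pos[of m] by linarith
    then show ?case using vv_denominator_pos[of m] by (simp add: zero_less_mult_iff)
  qed
qed

section \<open>Moments of the tails\<close>

lemma tail_fraction_bounds:
  assumes "s < b ^ r"
  shows "0 \<le> real s / real b ^ r" "real s / real b ^ r < 1"
proof -
  have "real s < real b ^ r" "0 < real b ^ r" using assms base_pos by (simp_all flip: of_nat_power)
  then show "0 \<le> real s / real b ^ r" "real s / real b ^ r < 1" by simp_all
qed

lemma tail_power_antimono:
  assumes "s < b ^ r" "m \<le> m'"
  shows "(1 - real s / real b ^ r) ^ m' \<le> (1 - real s / real b ^ r) ^ m"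
  using tail_fraction_bounds[OF assms(1)] assms(2) by (intro power_decreasing) auto

lemma digit_moment_0: "digit_moment b d j m 0 = (if j = 0 then 1 else 0)"
  unfolding digit_moment_def by simp

lemma digit_moment_nonneg: "0 \<le> digit_moment b d j m r"
  unfolding digit_moment_def using tail_fraction_bounds by (intro sum_nonneg) force

lemma digit_moment_antimono:
  assumes "m \<le> m'"
  shows "digit_moment b d j m' r \<le> digit_moment b d j m r"
  unfolding digit_moment_def
proof (intro sum_mono)
  fix s assume "s \<in> {..<b ^ r}"
  then have "(1 - real s / real b ^ r) ^ m' \<le> (1 - real s / real b ^ r) ^ m"
    using tail_power_antimono assms by simp
  then show "(if padded_digit_count b d r s = j then (1 - real s / real b ^ r) ^ m' / real b ^ r else 0)
       \<le> (if padded_digit_count b d r s = j then (1 - real s / real b ^ r) ^ m / real b ^ r else 0)"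
    by (auto intro: divide_right_mono)
qed

lemma digit_moment_strict_antimono:
  assumes "m < m'" "0 < s" "s < b ^ r" "padded_digit_count b d r s = j"
  shows "digit_moment b d j m' r < digit_moment b d j m r"
  unfolding digit_moment_def
proof (rule sum_strict_mono_ex1)
  show "\<forall>x\<in>{..<b ^ r}. (if padded_digit_count b d r x = j then (1 - real x / real b ^ r) ^ m' / real b ^ r else 0)
       \<le> (if padded_digit_count b d r x = j then (1 - real x / real b ^ r) ^ m / real b ^ r else 0)"
    using tail_power_antimono assms(1) by (auto intro: divide_right_mono)
  have "0 < real s / real b ^ r" using assms(2) base_pos by simp
  then have "(1 - real s / real b ^ r) ^ m' < (1 - real s / real b ^ r) ^ m"
    using assms(1) tail_fraction_bounds[OF assms(3)] by (intro power_strict_decreasing) auto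
  then show "\<exists>x\<in>{..<b ^ r}. (if padded_digit_count b d r x = j then (1 - real x / real b ^ r) ^ m' / real b ^ r else 0)
       < (if padded_digit_count b d r x = j then (1 - real x / real b ^ r) ^ m / real b ^ r else 0)"
    using assms(3,4) base_pos by (intro bexI[of _ s]) (auto intro: divide_strict_right_mono)
qed simp

lemma tail_power_leading_digit:
  assumes "a < b" "s < b ^ r"
  shows "(1 - real (a * b ^ r + s) / real b ^ Suc r) ^ m / real b ^ Suc r
    = (\<Sum>i\<le>m. real (m choose i) * real (b - 1 - a) ^ i * (1 - real s / real b ^ r) ^ (m - i)) / real b ^ (m + 1) / real b ^ r"
proof -
  have "1 - real (a * b ^ r + s) / real b ^ Suc r = (real (b - 1 - a) + (1 - real s / real b ^ r)) / real b"
    using assms base_pos by (simp add: of_nat_diff field_simps)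
  moreover have "(x / B) ^ m / B ^ Suc r = x ^ m / B ^ (m + 1) / B ^ r" for x B :: real
    by (simp add: power_divide mult_ac)
  ultimately show ?thesis by (simp only: binomial_ring)
qed

lemma digit_moment_Suc:
  "digit_moment b d j m (Suc r) = moment_op b d (\<lambda>j m. digit_moment b d j m r) j m / real b ^ (m + 1)"
proof -
  define y where "y s = 1 - real s / real b ^ r" for s
  define T where "T a i = (\<Sum>s<b ^ r. if (if a = d then 1 else 0) + padded_digit_count b d r s = j
                                         then y s ^ (m - i) / real b ^ r else 0)" for a i
  have "digit_moment b d j m (Suc r) = (\<Sum>a<b. \<Sum>s<b ^ r.
      (\<Sum>i\<le>m. real (m choose i) * real (b - 1 - a) ^ i *
        (if (if a = d then 1 else 0) + padded_digit_count b d r s = j then y s ^ (m - i) / real b ^ r else 0))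
      / real b ^ (m + 1))"
    unfolding digit_moment_def sum_lessThan_power_Suc
  proof (intro sum.cong refl)
    fix a s assume "a \<in> {..<b}" "s \<in> {..<b ^ r}"
    then have "a < b" "s < b ^ r" by simp_all
    then show "(if padded_digit_count b d (Suc r) (a * b ^ r + s) = j
          then (1 - real (a * b ^ r + s) / real b ^ Suc r) ^ m / real b ^ Suc r else 0)
      = (\<Sum>i\<le>m. real (m choose i) * real (b - 1 - a) ^ i *
          (if (if a = d then 1 else 0) + padded_digit_count b d r s = j then y s ^ (m - i) / real b ^ r else 0))
        / real b ^ (m + 1)"
      unfolding padded_digit_count_leading[OF \<open>a < b\<close> \<open>s < b ^ r\<close>]
        tail_power_leading_digit[OF \<open>a < b\<close> \<open>s < b ^ r\<close>, folded y_def]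
      by (auto simp: sum_divide_distrib sum_distrib_left intro!: sum.cong)
  qed
  also have "\<dots> = (\<Sum>i\<le>m. real (m choose i) * (\<Sum>a<b. real (b - 1 - a) ^ i * T a i)) / real b ^ (m + 1)"
    unfolding T_def sum_divide_distrib[symmetric]
    by (subst sum.swap, subst (2) sum.swap) (simp add: sum_distrib_left mult.assoc)
  also have "\<dots> = moment_op b d (\<lambda>j m. digit_moment b d j m r) j m / real b ^ (m + 1)"
  proof -
    have "T a i = (if a = d then (if 0 < j then digit_moment b d (j - 1) (m - i) r else 0)
                   else digit_moment b d j (m - i) r)" for a i
      unfolding T_def digit_moment_def y_def by (cases "a = d"; cases j) auto
    then have "(\<Sum>a<b. real (b - 1 - a) ^ i * T a i) = gamma' b d i * digit_moment b d j (m - i) r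
        + (if 0 < j then real (b - 1 - d) ^ i * digit_moment b d (j - 1) (m - i) r else 0)" for i
      using sum_reflected_digit_powers[of i "if 0 < j then digit_moment b d (j - 1) (m - i) r else 0"]
      by simp
    then show ?thesis unfolding moment_op_def by simp
  qed
  finally show ?thesis .
qed

lemma sum_digit_moment_le_vv: "(\<Sum>r<R. digit_moment b d j m r) \<le> vv b d j m"
proof (induction R arbitrary: j m)
  case 0
  then show ?case using vv_pos by (simp add: less_imp_le)
next
  case (Suc R)
  have "(\<Sum>r<Suc R. digit_moment b d j m r) = digit_moment b d j m 0 + (\<Sum>r<R. digit_moment b d j m (Suc r))"
    by (rule sum.lessThan_Suc_shift)
  also have "\<dots> = (if j = 0 then 1 else 0)
      + moment_op b d (\<lambda>j m. \<Sum>r<R. digit_moment b d j m r) j m / real b ^ (m + 1)"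
    unfolding digit_moment_0 digit_moment_Suc sum_divide_distrib[symmetric] moment_op_sum ..
  also have "\<dots> \<le> (if j = 0 then 1 else 0) + moment_op b d (vv b d) j m / real b ^ (m + 1)"
    using Suc.IH by (intro add_left_mono divide_right_mono moment_op_mono) auto
  also have "\<dots> = vv b d j m"
    using vv_moment_op_eq[of m j] base_pos by (simp add: field_simps)
  finally show ?case .
qed

lemma summable_digit_moment: "summable (digit_moment b d j m)"
  using sum_digit_moment_le_vv digit_moment_nonneg by (intro summableI_nonneg_bounded)

lemma suminf_digit_moment: "(\<Sum>r. digit_moment b d j m r) = vv b d j m"
proof (rule vv_unique)
  fix j m
  have "(\<Sum>r. digit_moment b d j m r) = digit_moment b d j m 0 + (\<Sum>r. digit_moment b d j m (Suc r))"
    using suminf_split_head[OF summable_digit_moment] by simp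
  also have "(\<Sum>r. digit_moment b d j m (Suc r))
      = moment_op b d (\<lambda>j m. \<Sum>r. digit_moment b d j m r) j m / real b ^ (m + 1)"
    unfolding digit_moment_Suc
    by (subst suminf_divide) (simp_all add: summable_moment_op suminf_moment_op summable_digit_moment)
  finally show "real b ^ (m + 1) * (\<Sum>r. digit_moment b d j m r)
      = (if j = 0 then real b ^ (m + 1) else 0) + moment_op b d (\<lambda>j m. \<Sum>r. digit_moment b d j m r) j m"
    using base_pos by (simp add: digit_moment_0 field_simps)
qed

lemma vv_le_base: "vv b d j m \<le> real b"
proof -
  have "(\<Sum>r. digit_moment b d j m r) \<le> (\<Sum>r. digit_moment b d j 0 r)"
    using digit_moment_antimono[of 0 m] by (intro suminf_le summable_digit_moment) auto
  then show ?thesis by (simp add: suminf_digit_moment vv_0)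
qed

lemma exists_tail_with_count:
  assumes "0 < j \<or> \<not> (b = 2 \<and> d = 1)"
  shows "\<exists>r s. 0 < s \<and> s < b ^ r \<and> padded_digit_count b d r s = j"
  using assms
proof (induction j)
  case 0
  define a where "a = (if d = 1 then 2 else 1 :: nat)"
  have "a < b" using 0 two_le_base unfolding a_def by auto
  then show ?case by (intro exI[of _ 1] exI[of _ a]) (auto simp: a_def)
next
  case (Suc j)
  show ?case
  proof (cases "0 < j \<or> \<not> (b = 2 \<and> d = 1)")
    case True
    then obtain r s where "0 < s" "s < b ^ r" "padded_digit_count b d r s = j"
      using Suc.IH by blast
    moreover have "d * b ^ r + s < b ^ Suc r"
    proof -
      have "d * b ^ r + s < (d + 1) * b ^ r" using \<open>s < b ^ r\<close> by simp
      also have "\<dots> \<le> b * b ^ r" using digit_less_base by (intro mult_right_mono) auto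
      finally show ?thesis by simp
    qed
    ultimately show ?thesis
      using padded_digit_count_leading[OF digit_less_base, of s r]
      by (intro exI[of _ "Suc r"] exI[of _ "d * b ^ r + s"]) simp
  next
    case False
    then show ?thesis by (intro exI[of _ 1] exI[of _ 1]) simp
  qed
qed

lemma vv_strict_antimono_m:
  assumes "\<not> (b = 2 \<and> d = 1 \<and> j = 0)" "m < m'"
  shows "vv b d j m' < vv b d j m"
proof -
  have "0 < j \<or> \<not> (b = 2 \<and> d = 1)" using assms(1) by auto
  then obtain r s where tail: "0 < s" "s < b ^ r" "padded_digit_count b d r s = j"
    using exists_tail_with_count by blast
  have "(\<Sum>r. digit_moment b d j m' r) < (\<Sum>r. digit_moment b d j m r)"
    using summable_digit_moment digit_moment_antimono[of m m' j] assms(2)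
      digit_moment_strict_antimono[OF assms(2) tail]
    by (intro suminf_strict_mono[where i = r]) simp_all
  then show ?thesis by (simp add: suminf_digit_moment)
qed

section \<open>Monotonicity in \<open>j\<close> and the limit\<close>

lemma binomial_sum_base:
  "(\<Sum>i\<le>m. real (m choose i) * real (b - 1 - d) ^ i * real b) = real b * (real (b - 1 - d) + 1) ^ m"
proof -
  have "(real (b - 1 - d) + 1) ^ m = (\<Sum>i\<le>m. real (m choose i) * real (b - 1 - d) ^ i)"
    using binomial_ring[of "real (b - 1 - d)" 1 m] by simp
  then show ?thesis by (simp add: sum_distrib_left mult_ac)
qed

lemma base_power_bound: "real b * (real (b - 1 - d) + 1) ^ m \<le> real b ^ (m + 1)"
proof -
  have "real (b - 1 - d) + 1 \<le> real b" using digit_less_base by (simp add: of_nat_diff)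
  then have "(real (b - 1 - d) + 1) ^ m \<le> real b ^ m" by (intro power_mono) auto
  then show ?thesis by (simp add: mult_left_mono)
qed

lemma vv_source_1_le_binomial: "vv_source b d 1 m \<le> real b * (real (b - 1 - d) + 1) ^ m"
  unfolding binomial_sum_base[symmetric] vv_source_def
  using vv_le_base by (simp, intro sum_mono mult_left_mono) auto

lemma vv_source_1_le: "vv_source b d 1 m \<le> vv_source b d 0 m"
  using order_trans[OF vv_source_1_le_binomial base_power_bound] by (simp add: vv_source_def)

lemma vv_source_1_less:
  assumes "1 \<le> m"
  shows "vv_source b d 1 m < vv_source b d 0 m"
proof (cases "b = 2 \<and> d = 1")
  case True
  then have "vv_source b d 1 m \<le> 2"
    using vv_source_1_le_binomial[of m] by simp
  also have "(2::real) < 2 ^ (m + 1)"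
    using assms by (simp add: one_less_power)
  finally show ?thesis using True by (simp add: vv_source_def)
next
  case False
  have "vv b d 0 m < vv b d 0 0" using False assms by (intro vv_strict_antimono_m) auto
  then have "vv_source b d 1 m < (\<Sum>i\<le>m. real (m choose i) * real (b - 1 - d) ^ i * real b)"
    unfolding vv_source_def using vv_le_base
    by (simp, intro sum_strict_mono_ex1) (auto intro!: mult_left_mono bexI[of _ 0] simp: vv_0)
  then show ?thesis
    using base_power_bound[of m] unfolding binomial_sum_base by (simp add: vv_source_def)
qed

lemma vv_source_Suc_Suc_le:
  assumes "\<And>m. vv b d (Suc j) m \<le> vv b d j m"
  shows "vv_source b d (Suc (Suc j)) m \<le> vv_source b d (Suc j) m"
  unfolding vv_source_def using assms by (simp, intro sum_mono mult_left_mono) auto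

lemma vv_source_Suc_Suc_less:
  assumes "\<And>m. vv b d (Suc j) m \<le> vv b d j m" "vv b d (Suc j) m < vv b d j m"
  shows "vv_source b d (Suc (Suc j)) m < vv_source b d (Suc j) m"
  unfolding vv_source_def using assms
  by (simp, intro sum_strict_mono_ex1) (auto intro!: mult_left_mono bexI[of _ 0])

lemma vv_Suc_le_less_of_source:
  assumes source_le: "\<And>m. vv_source b d (Suc j) m \<le> vv_source b d j m"
    and source_less: "\<And>m. 1 \<le> m \<Longrightarrow> vv_source b d (Suc j) m < vv_source b d j m"
  shows "vv b d (Suc j) m \<le> vv b d j m \<and> (1 \<le> m \<longrightarrow> vv b d (Suc j) m < vv b d j m)"
proof (induction m rule: less_induct)
  case (less m)
  define B where "B = real b ^ (m + 1) - real b + 1"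
  have sums: "(\<Sum>i\<in>{1..m}. real (m choose i) * gamma' b d i * vv b d (Suc j) (m - i))
      \<le> (\<Sum>i\<in>{1..m}. real (m choose i) * gamma' b d i * vv b d j (m - i))"
    using less.IH by (intro sum_mono mult_left_mono) (auto intro!: mult_nonneg_nonneg gamma'_nonneg)
  have "B * vv b d (Suc j) m \<le> B * vv b d j m"
    using sums source_le[of m] vv_eq_source[of m "Suc j"] vv_eq_source[of m j] unfolding B_def by linarith
  moreover have "B * vv b d (Suc j) m < B * vv b d j m" if "1 \<le> m"
    using sums source_less[OF that] vv_eq_source[of m "Suc j"] vv_eq_source[of m j] unfolding B_def by linarith
  ultimately show ?case using vv_denominator_pos[of m] unfolding B_def by simp
qed

lemma vv_Suc_le_less: "vv b d (Suc j) m \<le> vv b d j m \<and> (1 \<le> m \<longrightarrow> vv b d (Suc j) m < vv b d j m)"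
proof (induction j arbitrary: m)
  case 0
  show ?case
    using vv_source_1_le vv_source_1_less by (intro vv_Suc_le_less_of_source) (simp_all add: One_nat_def)
next
  case (Suc j)
  show ?case
    using Suc.IH by (intro vv_Suc_le_less_of_source vv_source_Suc_Suc_le vv_source_Suc_Suc_less) auto
qed

lemma vv_strict_antimono_j:
  assumes "1 \<le> m" "j < j'"
  shows "vv b d j' m < vv b d j m"
  using lift_Suc_mono_less[of "\<lambda>j. - vv b d j m" j j'] vv_Suc_le_less assms by simp

lemma vv_limit_sum:
  "(\<Sum>i\<in>{1..m}. real (m choose i) * (gamma' b d i + real (b - 1 - d) ^ i) * (real b / real (m - i + 1)))
     = (real b ^ (m + 1) - real b) * (real b / real (m + 1))"
proof -
  have "(\<Sum>i\<in>{1..m}. real (m choose i) * (gamma' b d i + real (b - 1 - d) ^ i) * (real b / real (m - i + 1)))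
      = real b * (\<Sum>i\<in>{1..m}. real (m choose i) * (\<Sum>a<b. real a ^ i) / real (m - i + 1))"
    unfolding sum_distrib_left gamma'_add_power by (intro sum.cong refl) simp
  also have "\<dots> = real b * ((real b ^ (m + 1) - real b) / real (m + 1))"
    by (simp only: sum_binomial_power_sums_div)
  finally show ?thesis by simp
qed

lemma vv_limit_eq:
  assumes "1 \<le> m" and L: "(\<lambda>j. vv b d j m) \<longlonglongrightarrow> L"
    and IH: "\<And>i. i \<in> {1..m} \<Longrightarrow> (\<lambda>j. vv b d j (m - i)) \<longlonglongrightarrow> real b / real (m - i + 1)"
  shows "L = real b / real (m + 1)"
proof -
  define v where "v i = real b / real (m - i + 1)" for i
  define B where "B = real b ^ (m + 1) - real b + 1"
  define S where "S = (\<Sum>i\<in>{1..m}. real (m choose i) * (gamma' b d i + real (b - 1 - d) ^ i) * v i)"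
  have rec: "B * vv b d (Suc j) m = vv b d j m
      + (\<Sum>i\<in>{1..m}. real (m choose i) * real (b - 1 - d) ^ i * vv b d j (m - i))
      + (\<Sum>i\<in>{1..m}. real (m choose i) * gamma' b d i * vv b d (Suc j) (m - i))" for j
    using vv_eq_source[of m "Suc j"]
      sum_atMost_eq_head_plus_tail[of "\<lambda>i. real (m choose i) * real (b - 1 - d) ^ i * vv b d j (m - i)" m]
    by (simp add: vv_source_def B_def)
  have "(\<lambda>j. B * vv b d (Suc j) m)
        \<longlonglongrightarrow> L + (\<Sum>i\<in>{1..m}. real (m choose i) * real (b - 1 - d) ^ i * v i)
           + (\<Sum>i\<in>{1..m}. real (m choose i) * gamma' b d i * v i)"
    unfolding rec v_def by (intro tendsto_add tendsto_sum tendsto_mult_left L IH LIMSEQ_Suc)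
  moreover have "(\<lambda>j. B * vv b d (Suc j) m) \<longlonglongrightarrow> B * L"
    by (intro tendsto_mult_left LIMSEQ_Suc L)
  moreover have "S = (\<Sum>i\<in>{1..m}. real (m choose i) * real (b - 1 - d) ^ i * v i)
           + (\<Sum>i\<in>{1..m}. real (m choose i) * gamma' b d i * v i)"
    unfolding S_def sum.distrib[symmetric] by (intro sum.cong refl) (simp add: algebra_simps)
  ultimately have "B * L = L + S"
    using LIMSEQ_unique by (simp add: add.assoc)
  then have "(real b ^ (m + 1) - real b) * L = (real b ^ (m + 1) - real b) * (real b / real (m + 1))"
    using vv_limit_sum[of m] unfolding S_def v_def B_def by (simp add: algebra_simps)
  moreover have "real b ^ 1 < real b ^ (m + 1)"
    using two_le_base assms(1) by (intro power_strict_increasing) auto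
  ultimately show ?thesis
    by (metis mult_left_cancel less_irrefl power_one_right diff_gt_0_iff_gt)
qed

lemma vv_tendsto: "(\<lambda>j. vv b d j m) \<longlonglongrightarrow> real b / real (m + 1)"
proof (induction m rule: less_induct)
  case (less m)
  show ?case
  proof (cases "m = 0")
    case True
    then show ?thesis by (simp add: vv_0)
  next
    case False
    have "decseq (\<lambda>j. vv b d j m)" using vv_Suc_le_less by (intro decseq_SucI) blast
    then obtain L where L: "(\<lambda>j. vv b d j m) \<longlonglongrightarrow> L"
      using decseq_convergent[of _ 0] vv_pos less_imp_le by metis
    moreover have "(\<lambda>j. vv b d j (m - i)) \<longlonglongrightarrow> real b / real (m - i + 1)" if "i \<in> {1..m}" for i
      using less.IH[of "m - i"] that by (auto simp: Suc_diff_le)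
    ultimately have "L = real b / real (m + 1)"
      using False by (intro vv_limit_eq) auto
    then show ?thesis using L by simp
  qed
qed

section \<open>Expansion of the Irwin sum\<close>

lemma has_sum_tail_moments:
  "((\<lambda>(r, s). (1 - real s / real b ^ r) ^ m / real b ^ r) has_sum vv b d j m) (tail_blocks b d j)"
  unfolding tail_blocks_def
proof (rule has_sum_SigmaI_nonneg)
  fix r :: nat
  have "(\<Sum>s | s < b ^ r \<and> padded_digit_count b d r s = j. (1 - real s / real b ^ r) ^ m / real b ^ r)
      = digit_moment b d j m r"
    unfolding digit_moment_def by (subst sum.inter_filter[symmetric]) (simp_all add: conj_commute)
  then show "((\<lambda>s. case (r, s) of (r, s) \<Rightarrow> (1 - real s / real b ^ r) ^ m / real b ^ r) has_sum digit_moment b d j m r)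
      {s. s < b ^ r \<and> padded_digit_count b d r s = j}"
    by (simp add: has_sum_finiteI)
next
  show "(digit_moment b d j m has_sum vv b d j m) UNIV"
    using summable_digit_moment digit_moment_nonneg
    by (intro sums_nonneg_imp_has_sum) (simp_all add: sums_iff suminf_digit_moment)
next
  fix r s assume "s \<in> {s. s < b ^ r \<and> padded_digit_count b d r s = j}"
  then show "0 \<le> (case (r, s) of (r, s) \<Rightarrow> (1 - real s / real b ^ r) ^ m / real b ^ r)"
    using tail_fraction_bounds[of s r] by simp
qed

lemma summable_vv_div_power:
  assumes "1 \<le> n"
  shows "summable (\<lambda>m. vv b d j m / real (n + 1) ^ (m + 1))"
proof (rule summable_comparison_test')
  show "summable (\<lambda>m. real b * (1 / real (n + 1)) ^ (m + 1))"
    using assms by (intro summable_mult summable_ignore_initial_segment[where k = 1, simplified] summable_geometric) auto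
next
  fix m
  show "norm (vv b d j m / real (n + 1) ^ (m + 1)) \<le> real b * (1 / real (n + 1)) ^ (m + 1)"
    using vv_le_base[of j m] vv_pos[of j m] by (simp add: power_divide divide_right_mono)
qed

lemma has_sum_reciprocal_tail:
  assumes "1 \<le> n" "s < b ^ r"
  shows "((\<lambda>m. (1 - real s / real b ^ r) ^ m / real b ^ r / real (n + 1) ^ (m + 1)) has_sum 1 / real (n * b ^ r + s)) UNIV"
proof -
  have "((\<lambda>m. (1 - real s / real b ^ r) ^ m / (real n + 1) ^ (m + 1)) has_sum 1 / (real n + real s / real b ^ r)) UNIV"
    using assms tail_fraction_bounds[OF assms(2)] by (intro has_sum_reciprocal_expansion) auto
  then have "((\<lambda>m. (1 - real s / real b ^ r) ^ m / (real n + 1) ^ (m + 1) / real b ^ r)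
      has_sum 1 / (real n + real s / real b ^ r) / real b ^ r) UNIV"
    by (rule has_sum_divide_const)
  moreover have "real n + real s / real b ^ r = real (n * b ^ r + s) / real b ^ r"
    using base_pos by (simp add: field_simps)
  then have "1 / (real n + real s / real b ^ r) / real b ^ r = 1 / real (n * b ^ r + s)"
    using base_pos by simp
  ultimately show ?thesis by (simp add: field_simps)
qed

text \<open>Fubini for nonnegative terms, summing over the tails first.\<close>

lemma has_sum_reciprocal_tail_blocks:
  assumes "1 \<le> n"
  shows "((\<lambda>(r, s). 1 / real (n * b ^ r + s)) has_sum (\<Sum>m. vv b d j m / real (n + 1) ^ (m + 1))) (tail_blocks b d j)"
proof -
  define h where "h = (\<lambda>(m, r, s). (1 - real s / real b ^ r) ^ m / real b ^ r / real (n + 1) ^ (m + 1))"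
  have "(h has_sum (\<Sum>m. vv b d j m / real (n + 1) ^ (m + 1))) (UNIV \<times> tail_blocks b d j)"
  proof (rule has_sum_SigmaI_nonneg)
    fix m :: nat
    show "((\<lambda>y. h (m, y)) has_sum vv b d j m / real (n + 1) ^ (m + 1)) (tail_blocks b d j)"
      using has_sum_divide_const[OF has_sum_tail_moments[of m j]]
      unfolding h_def by (simp add: case_prod_unfold)
  next
    show "((\<lambda>m. vv b d j m / real (n + 1) ^ (m + 1)) has_sum (\<Sum>m. vv b d j m / real (n + 1) ^ (m + 1))) UNIV"
      using summable_vv_div_power[OF assms] vv_pos
      by (intro sums_nonneg_imp_has_sum) (auto intro: less_imp_le)
  next
    fix m y assume "y \<in> tail_blocks b d j"
    then obtain r s where "y = (r, s)" "s < b ^ r" unfolding tail_blocks_def by auto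
    then show "0 \<le> h (m, y)" using tail_fraction_bounds(2)[of s r] unfolding h_def by simp
  qed
  then have "((\<lambda>(x, y). h (y, x)) has_sum (\<Sum>m. vv b d j m / real (n + 1) ^ (m + 1))) (tail_blocks b d j \<times> UNIV)"
    by (rule has_sum_swap[THEN iffD1])
  then show ?thesis
  proof (rule has_sum_SigmaD)
    fix rs assume "rs \<in> tail_blocks b d j"
    then obtain r s where "rs = (r, s)" "s < b ^ r" unfolding tail_blocks_def by auto
    then show "((\<lambda>m. case (rs, m) of (x, y) \<Rightarrow> h (y, x)) has_sum (case rs of (r, s) \<Rightarrow> 1 / real (n * b ^ r + s))) UNIV"
      using has_sum_reciprocal_tail[OF assms \<open>s < b ^ r\<close>] unfolding h_def by simp
  qed
qed

lemma prefix_tail_less: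
  assumes "1 \<le> l" "n < b ^ l" "s < b ^ r" "b ^ (l - 1) \<le> n'" "r < r'"
  shows "n * b ^ r + s < n' * b ^ r' + s'"
proof -
  have "n * b ^ r + s < (n + 1) * b ^ r" using assms(3) by simp
  also have "\<dots> \<le> b ^ l * b ^ r" using assms(2) by (intro mult_right_mono) auto
  also have "\<dots> \<le> b ^ (l - 1 + r')" using assms(1,5) base_pos by (simp flip: power_add) (intro power_increasing; simp)
  also have "\<dots> \<le> n' * b ^ r'" using assms(4) by (simp add: power_add mult_right_mono)
  finally show ?thesis by simp
qed

lemma prefix_tail_eq:
  assumes "1 \<le> l" "b ^ (l - 1) \<le> n" "n < b ^ l" "s < b ^ r" "b ^ (l - 1) \<le> n'" "n' < b ^ l" "s' < b ^ r'"
    and eq: "n * b ^ r + s = n' * b ^ r' + s'"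
  shows "n = n' \<and> r = r' \<and> s = s'"
proof -
  have "r = r'"
    using prefix_tail_less[OF assms(1,3,4,5), of r' s'] prefix_tail_less[OF assms(1,6,7,2), of r s] eq
    by (metis less_irrefl nat_neq_iff)
  then have "(n * b ^ r + s) div b ^ r = n' \<and> (n * b ^ r + s) mod b ^ r = s'"
    using eq assms(7) base_pos by simp
  then show ?thesis using assms(4) base_pos \<open>r = r'\<close> by simp
qed

lemma prefix_tail_inj:
  assumes "1 \<le> l"
  shows "inj_on (\<lambda>(n, r, s). n * b ^ r + s) {(n, r, s). b ^ (l - 1) \<le> n \<and> n < b ^ l \<and> s < b ^ r}"
proof (rule inj_onI)
  fix x y
  assume "x \<in> {(n, r, s). b ^ (l - 1) \<le> n \<and> n < b ^ l \<and> s < b ^ r}"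
    and "y \<in> {(n, r, s). b ^ (l - 1) \<le> n \<and> n < b ^ l \<and> s < b ^ r}"
    and "(\<lambda>(n, r, s). n * b ^ r + s) x = (\<lambda>(n, r, s). n * b ^ r + s) y"
  moreover obtain n r s n' r' s' where "x = (n, r, s)" "y = (n', r', s')" by (cases x, cases y)
  ultimately show "x = y" using prefix_tail_eq[OF assms, of n s r n' s' r'] by simp
qed

lemma prefix_tail_image:
  fixes l k :: nat
  assumes "1 \<le> l"
  defines "S \<equiv> {n. b ^ (l - 1) \<le> n \<and> n < b ^ l \<and> digit_count b d n \<le> k}"
  shows "(\<lambda>(n, r, s). n * b ^ r + s) ` Sigma S (\<lambda>n. tail_blocks b d (k - digit_count b d n))
           = {N. b ^ (l - 1) \<le> N \<and> digit_count b d N = k}"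
proof (intro equalityI subsetI)
  fix N assume "N \<in> (\<lambda>(n, r, s). n * b ^ r + s) ` Sigma S (\<lambda>n. tail_blocks b d (k - digit_count b d n))"
  then obtain n r s where N: "N = n * b ^ r + s" "b ^ (l - 1) \<le> n" "digit_count b d n \<le> k" "s < b ^ r"
      "padded_digit_count b d r s = k - digit_count b d n"
    unfolding S_def tail_blocks_def by auto
  moreover have "0 < n" using N(2) by (rule pos_of_base_power_le)
  moreover have "n \<le> n * b ^ r" using base_pos by simp
  then have "b ^ (l - 1) \<le> N" using N(1,2) by linarith
  ultimately show "N \<in> {N. b ^ (l - 1) \<le> N \<and> digit_count b d N = k}"
    by (simp add: digit_count_append)
next
  fix N assume N: "N \<in> {N. b ^ (l - 1) \<le> N \<and> digit_count b d N = k}"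
  then obtain r where r: "b ^ (l - 1) \<le> N div b ^ r" "N div b ^ r < b ^ l"
    using exists_leading_block[OF assms(1)] by blast
  define n where "n = N div b ^ r"
  define s where "s = N mod b ^ r"
  have N_eq: "N = n * b ^ r + s" unfolding n_def s_def by (rule div_mult_mod_eq[symmetric])
  have "s < b ^ r" unfolding s_def using base_pos by simp
  moreover have "0 < n" using r(1) unfolding n_def by (rule pos_of_base_power_le)
  ultimately have "digit_count b d N = digit_count b d n + padded_digit_count b d r s"
    unfolding N_eq by (rule digit_count_append[rotated])
  then show "N \<in> (\<lambda>(n, r, s). n * b ^ r + s) ` Sigma S (\<lambda>n. tail_blocks b d (k - digit_count b d n))"
    using N r \<open>s < b ^ r\<close> unfolding S_def tail_blocks_def n_def[symmetric]
    by (intro image_eqI[of _ _ "(n, r, s)"]) (auto simp: N_eq)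
qed

lemma has_sum_reciprocal_prefix_blocks:
  fixes l k :: nat
  assumes "1 \<le> l"
  defines "S \<equiv> {n. b ^ (l - 1) \<le> n \<and> n < b ^ l \<and> digit_count b d n \<le> k}"
  shows "((\<lambda>N. 1 / real N) has_sum (\<Sum>n\<in>S. \<Sum>m. vv b d (k - digit_count b d n) m / real (n + 1) ^ (m + 1)))
           {N. b ^ (l - 1) \<le> N \<and> digit_count b d N = k}"
proof -
  define f where "f = (\<lambda>(n, r, s). n * b ^ r + s :: nat)"
  define V where "V n = (\<Sum>m. vv b d (k - digit_count b d n) m / real (n + 1) ^ (m + 1))" for n
  have "finite S" unfolding S_def by (rule finite_subset[of _ "{..<b ^ l}"]) auto
  have sums: "((\<lambda>x. 1 / real (f x)) has_sum (\<Sum>n\<in>S. V n)) (Sigma S (\<lambda>n. tail_blocks b d (k - digit_count b d n)))"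
  proof (rule has_sum_SigmaI_nonneg)
    fix n assume "n \<in> S"
    then have "1 \<le> n"
      using pos_of_base_power_le unfolding S_def by (auto simp: Suc_le_eq)
    then show "((\<lambda>y. 1 / real (f (n, y))) has_sum V n) (tail_blocks b d (k - digit_count b d n))"
      using has_sum_reciprocal_tail_blocks unfolding f_def V_def by (simp add: case_prod_unfold)
  next
    show "(V has_sum sum V S) S" using \<open>finite S\<close> by (simp add: has_sum_finiteI)
  qed auto
  have bij: "bij_betw f (Sigma S (\<lambda>n. tail_blocks b d (k - digit_count b d n)))
      {N. b ^ (l - 1) \<le> N \<and> digit_count b d N = k}"
  proof (rule bij_betw_imageI)
    show "inj_on f (Sigma S (\<lambda>n. tail_blocks b d (k - digit_count b d n)))"
      using prefix_tail_inj[OF assms(1)] unfolding f_def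
      by (rule inj_on_subset) (auto simp: S_def tail_blocks_def)
    show "f ` Sigma S (\<lambda>n. tail_blocks b d (k - digit_count b d n)) = {N. b ^ (l - 1) \<le> N \<and> digit_count b d N = k}"
      unfolding f_def S_def by (rule prefix_tail_image[OF assms(1)])
  qed
  from sums show ?thesis
    using has_sum_reindex_bij_betw[OF bij, of "\<lambda>N. 1 / real N"] unfolding V_def by simp
qed

lemma
  assumes "\<And>n. n \<in> S \<Longrightarrow> 1 \<le> n"
  shows summable_vv_series_tail:
      "summable (\<lambda>m. \<Sum>n\<in>S. vv b d (J n) (m + 1) / real (n + 1) ^ (m + 1 + 1))"
    and sum_vv_series_split_head:
      "(\<Sum>n\<in>S. \<Sum>m. vv b d (J n) m / real (n + 1) ^ (m + 1))
         = real b * (\<Sum>n\<in>S. 1 / real (n + 1)) + (\<Sum>m. \<Sum>n\<in>S. vv b d (J n) (m + 1) / real (n + 1) ^ (m + 1 + 1))"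
proof -
  have summable: "summable (\<lambda>m. vv b d (J n) (m + 1) / real (n + 1) ^ (m + 1 + 1))" if "n \<in> S" for n
    using summable_Suc_iff[THEN iffD2, OF summable_vv_div_power[OF assms[OF that]]] by simp
  then show "summable (\<lambda>m. \<Sum>n\<in>S. vv b d (J n) (m + 1) / real (n + 1) ^ (m + 1 + 1))"
    by (rule summable_sum)
  have "(\<Sum>n\<in>S. \<Sum>m. vv b d (J n) m / real (n + 1) ^ (m + 1)) = (\<Sum>n\<in>S. real b * (1 / real (n + 1))
      + (\<Sum>m. vv b d (J n) (m + 1) / real (n + 1) ^ (m + 1 + 1)))"
    using suminf_split_head[OF summable_vv_div_power[OF assms]] by (intro sum.cong refl) (simp add: vv_0)
  also have "\<dots> = real b * (\<Sum>n\<in>S. 1 / real (n + 1))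
      + (\<Sum>n\<in>S. \<Sum>m. vv b d (J n) (m + 1) / real (n + 1) ^ (m + 1 + 1))"
    by (simp only: sum.distrib sum_distrib_left)
  also have "(\<Sum>n\<in>S. \<Sum>m. vv b d (J n) (m + 1) / real (n + 1) ^ (m + 1 + 1))
      = (\<Sum>m. \<Sum>n\<in>S. vv b d (J n) (m + 1) / real (n + 1) ^ (m + 1 + 1))"
    by (rule suminf_sum[symmetric]) (rule summable)
  finally show "(\<Sum>n\<in>S. \<Sum>m. vv b d (J n) m / real (n + 1) ^ (m + 1))
      = real b * (\<Sum>n\<in>S. 1 / real (n + 1)) + (\<Sum>m. \<Sum>n\<in>S. vv b d (J n) (m + 1) / real (n + 1) ^ (m + 1 + 1))" .
qed

lemma irwin_sum_expansion:
  fixes l k :: nat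
  assumes "1 \<le> l"
  defines "S \<equiv> {n. b ^ (l - 1) \<le> n \<and> n < b ^ l \<and> digit_count b d n \<le> k}"
  defines "t \<equiv> (\<lambda>m. \<Sum>n\<in>S. vv b d (k - digit_count b d n) m / real (n + 1) ^ (m + 1))"
  shows "summable (\<lambda>m. t (m + 1))"
    and "irwin_sum b d k =
            (\<Sum>n\<in>{n. 0 < n \<and> n < b ^ (l - 1) \<and> digit_count b d n = k}. 1 / real n)
            + real b * (\<Sum>n\<in>S. 1 / real (n + 1)) + (\<Sum>m. t (m + 1))"
proof -
  have ge1: "1 \<le> n" if "n \<in> S" for n
    using that pos_of_base_power_le unfolding S_def by (auto simp: Suc_le_eq)
  then show "summable (\<lambda>m. t (m + 1))"
    unfolding t_def using summable_vv_series_tail by simp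
  define A where "A = {n. 0 < n \<and> n < b ^ (l - 1) \<and> digit_count b d n = k}"
  have "((\<lambda>N. 1 / real N) has_sum (\<Sum>n\<in>A. 1 / real n)) A"
    by (rule has_sum_finiteI) (auto simp: A_def intro: finite_subset[of _ "{..<b ^ (l - 1)}"])
  then have "((\<lambda>N. 1 / real N) has_sum (\<Sum>n\<in>A. 1 / real n)
      + (\<Sum>n\<in>S. \<Sum>m. vv b d (k - digit_count b d n) m / real (n + 1) ^ (m + 1)))
      (A \<union> {N. b ^ (l - 1) \<le> N \<and> digit_count b d N = k})"
    using has_sum_reciprocal_prefix_blocks[OF assms(1), of k] unfolding S_def A_def
    by (intro has_sum_Un_disjoint) auto
  moreover have "A \<union> {N. b ^ (l - 1) \<le> N \<and> digit_count b d N = k} = {n. 0 < n \<and> digit_count b d n = k}"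
    unfolding A_def using pos_of_base_power_le by auto
  ultimately show "irwin_sum b d k = (\<Sum>n\<in>{n. 0 < n \<and> n < b ^ (l - 1) \<and> digit_count b d n = k}. 1 / real n)
            + real b * (\<Sum>n\<in>S. 1 / real (n + 1)) + (\<Sum>m. t (m + 1))"
    unfolding irwin_sum_def A_def t_def using sum_vv_series_split_head[OF ge1]
    by (simp add: infsumI add.assoc)
qed

end

theorem mainTheorem2:
  fixes b d :: nat
  assumes "b \<ge> 2" and "d < b"
  shows
   "(\<forall>l k. l \<ge> 1 \<longrightarrow>
      (let S = {n. b ^ (l - 1) \<le> n \<and> n < b ^ l \<and> digit_count b d n \<le> k};
           t = (\<lambda>m. \<Sum>n\<in>S. vv b d (k - digit_count b d n) m / real (n + 1) ^ (m + 1))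
       in summable (\<lambda>m. t (m + 1)) \<and>
          irwin_sum b d k =
            (\<Sum>n\<in>{n. 0 < n \<and> n < b ^ (l - 1) \<and> digit_count b d n = k}. 1 / real n)
            + real b * (\<Sum>n\<in>S. 1 / real (n + 1))
            + (\<Sum>m. t (m + 1))))
    \<and> (\<forall>j. vv b d j 0 = real b)
    \<and> (\<forall>j m. m \<ge> 1 \<longrightarrow> 0 < vv b d j m \<and> vv b d j m \<le> real b)
    \<and> (\<forall>j. \<not> (b = 2 \<and> d = 1 \<and> j = 0) \<longrightarrow>
          (\<forall>m m'. m < m' \<longrightarrow> vv b d j m' < vv b d j m))
    \<and> (b = 2 \<and> d = 1 \<longrightarrow> (\<forall>m. vv b d 0 m = 2))
    \<and> (\<forall>m. m \<ge> 1 \<longrightarrow>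
          (\<forall>j j'. j < j' \<longrightarrow> vv b d j' m < vv b d j m)
          \<and> (\<lambda>j. vv b d j m) \<longlonglongrightarrow> real b / real (m + 1))"
proof -
  interpret irwin_base b d using assms by unfold_locales
  show ?thesis
    using irwin_sum_expansion vv_0 vv_pos vv_le_base vv_strict_antimono_m vv_exceptional
      vv_strict_antimono_j vv_tendsto
    by (simp add: Let_def)
qed

end
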